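(* Let $0<a\le b\le 1$ be constants, let $\mathcal{T}=\{t_1,\dots,t_K\}\subset\mathbb{R}^t$ be finite, let $f,g:\mathcal{T}\to\mathbb{R}$ be finite-valued, let $p$ be a probability mass function on $\mathcal{T}$, and let $\hat p_n$ be the empirical mass function of i.i.d. observations $T_1,\dots,T_n$ with mass function $p$. Put $\mathcal{W}=[1/b,1/a]^K$, $$\beta(w)=\frac{\sum_{k=1}^K w_k f(t_k)p(t_k)}{\sum_{k=1}^K w_k g(t_k)p(t_k)},\qquad \hat\beta_n(w)=\frac{\sum_{k=1}^K w_k f(t_k)\hat p_n(t_k)}{\sum_{k=1}^K w_k g(t_k)\hat p_n(t_k)},$$ $\beta^H=\sup_{\mathcal{W}}\beta$, $\beta^L=\inf_{\mathcal{W}}\beta$, $\hat\beta^H_n=\sup_{\mathcal{W}}\hat\beta_n$, $\hat\beta^L_n=\inf_{\mathcal{W}}\hat\beta_n$. Assume: (R1) for all $k$ and $m\in\{L,H\}$, $f(t_k)/g(t_k)\neq\beta^m$, and for all sufficiently large $n$, $f(t_k)/g(t_k)\neq\hat\beta^m_n$ almost surely; (R2) there is a constant $c>0$ such that for all $w\in\mathcal{W}$ and all sufficiently large $n$, $\sum_k w_k g(t_k)p(t_k)\ge c$ and, with probability one, $\sum_k w_k g(t_k)\hat p_n(t_k)\ge c$. For $m=L,H$, let $w^m$ be the unique population optimizer ($\beta(w^m)=\beta^m$) and $\hat w^m$ the (for large $n$, almost surely unique) sample optimizer ($\hat\beta_n(\hat w^m)=\hat\beta^m_n$). Suppose $\sigma^2:\mathcal{W}\to\mathbb{R}$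 is continuous and there exist random functions $\hat\sigma^2_n$ on $\mathcal{W}$ such that $\sup_{w\in\mathcal{W}}|\hat\sigma^2_n(w)-\sigma^2(w)|\to 0$ with probability one. Then $\hat\sigma^2_n(\hat w^m)\to\sigma^2(w^m)$ with probability one, for $m=L,H$.
   Context: Motivating setting: individuals are selected into a sample with indicator $S_i$, with $P(S_i=1\mid D_i)=1/\lambda_0(D_i)$, and it is assumed that $1\le 1/b\le\lambda_0(D_i)\le 1/a<\infty$ almost surely; $T_i$ has finite support $\mathcal{T}$ among selected units. In the paper $\sigma^2(w)$ is the asymptotic variance of $\sqrt n(\hat\beta_n(w)-\beta(w))$ and $\hat\sigma_n^2$ is an estimator of it. *)

theory Defs
  imports "HOL-Probability.Probability"
begin

text \<open>The weight box W = [1/b, 1/a]^K, weights indexed by a finite type 'k with K = CARD('k).\<close>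
definition Wbox :: "real \<Rightarrow> real \<Rightarrow> (real^'k::finite) set" where
  "Wbox a b = {w. \<forall>k. 1 / b \<le> w $ k \<and> w $ k \<le> 1 / a}"

definition ratio_beta ::
  "('k::finite \<Rightarrow> 'a) \<Rightarrow> ('a \<Rightarrow> real) \<Rightarrow> ('a \<Rightarrow> real) \<Rightarrow> ('a \<Rightarrow> real) \<Rightarrow> real^'k \<Rightarrow> real" where
  "ratio_beta t f g q w =
     (\<Sum>k\<in>UNIV. w $ k * f (t k) * q (t k)) / (\<Sum>k\<in>UNIV. w $ k * g (t k) * q (t k))"

text \<open>Empirical mass function of the first n observations T_0, ..., T_(n-1).\<close>
definition emp_pmf :: "(nat \<Rightarrow> 'o \<Rightarrow> 'a) \<Rightarrow> nat \<Rightarrow> 'o \<Rightarrow> 'a \<Rightarrow> real" where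
  "emp_pmf T n \<omega> x = real (card {i. i < n \<and> T i \<omega> = x}) / real n"

end

theory Submission
  imports Defs
begin

(* The empirical frequencies converge almost surely: Hoeffding's inequality makes the
   deviation probabilities summable, and Borel-Cantelli turns this into almost sure
   convergence. As the population denominators are bounded below by c on the compact box W,
   the sample ratios then converge to beta uniformly on W. A unique minimizer of a continuous
   function on a compact set is well separated, so minimizers of uniform approximants converge
   to it (maximizers likewise, by negation). Finally, uniform convergence of sigma2hat to the
   continuous sigma2 allows evaluation at the converging optimizers. *)

lemma emp_pmf_eq_sum_of_bool:
  "emp_pmf T n \<omega> x = (\<Sum>i<n. of_bool (T i \<omega> = x)) / real n"
  by (simp add: emp_pmf_def lessThan_def Collect_conj_eq)

lemma AE_eventually_sequentiallyI:
  assumes "\<exists>N. \<forall>n\<ge>N. AE x in M. P n x"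
  shows "AE x in M. eventually (\<lambda>n. P n x) sequentially"
proof -
  obtain N where "\<forall>n\<ge>N. AE x in M. P n x"
    using assms by blast
  then have "AE x in M. \<forall>n. N \<le> n \<longrightarrow> P n x"
    by (simp add: AE_all_countable)
  then show ?thesis
    by (rule AE_mp) (auto simp: eventually_sequentially)
qed

context prob_space
begin

lemma AE_tendsto_of_summable_deviation_prob:
  fixes X :: "nat \<Rightarrow> 'a \<Rightarrow> real"
  assumes [measurable]: "\<And>n. X n \<in> borel_measurable M"
    and summable: "\<And>\<epsilon>. \<epsilon> > 0 \<Longrightarrow> summable (\<lambda>n. prob {\<omega>\<in>space M. \<epsilon> \<le> \<bar>X n \<omega> - L\<bar>})"
  shows "AE \<omega> in M. (\<lambda>n. X n \<omega>) \<longlonglongrightarrow> L"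
proof -
  have "AE \<omega> in M. eventually (\<lambda>n. \<bar>X n \<omega> - L\<bar> < \<epsilon>) sequentially" if "\<epsilon> > 0" for \<epsilon>
  proof -
    have "AE \<omega> in M. eventually (\<lambda>n. \<omega> \<in> space M - {\<omega>\<in>space M. \<epsilon> \<le> \<bar>X n \<omega> - L\<bar>}) sequentially"
      using summable[OF that] by (intro borel_cantelli_AE1) (simp_all add: emeasure_eq_measure)
    then show ?thesis
      by (rule AE_mp) (auto simp: not_le elim!: eventually_mono intro!: AE_I2)
  qed
  then have "AE \<omega> in M. \<forall>m. eventually (\<lambda>n. \<bar>X n \<omega> - L\<bar> < inverse (real (Suc m))) sequentially"
    by (simp add: AE_all_countable)
  then show ?thesis
  proof (rule AE_mp, intro AE_I2 impI tendstoI)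
    fix \<omega> and r :: real
    assume close: "\<forall>m. eventually (\<lambda>n. \<bar>X n \<omega> - L\<bar> < inverse (real (Suc m))) sequentially"
      and "r > 0"
    then obtain m where "inverse (real (Suc m)) < r"
      using reals_Archimedean by blast
    with close[rule_format, of m] show "eventually (\<lambda>n. dist (X n \<omega>) L < r) sequentially"
      by (auto simp: dist_real_def elim!: eventually_mono)
  qed
qed

lemma emp_pmf_deviation_prob_le:
  fixes T :: "nat \<Rightarrow> 'a \<Rightarrow> 'b"
  assumes T_meas: "\<And>i. T i \<in> M \<rightarrow>\<^sub>M count_space UNIV"
    and indep: "indep_vars (\<lambda>_. count_space UNIV) T UNIV"
    and distr: "\<And>i. prob {\<omega>\<in>space M. T i \<omega> = x} = P"
    and "\<epsilon> \<ge> 0" and "n > 0"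
  shows "prob {\<omega>\<in>space M. \<epsilon> \<le> \<bar>emp_pmf T n \<omega> x - P\<bar>} \<le> 2 * exp (- 2 * real n * \<epsilon>\<^sup>2)"
proof -
  define X where "X i \<omega> = (of_bool (T i \<omega> = x) :: real)" for i \<omega>
  have expectation_X: "expectation (X i) = P" for i
  proof -
    have "expectation (X i) = expectation (indicator {\<omega>\<in>space M. T i \<omega> = x})"
      by (intro Bochner_Integration.integral_cong) (auto simp: X_def indicator_def)
    moreover have "{\<omega>\<in>space M. T i \<omega> = x} \<in> events"
      using T_meas[of i] by measurable
    ultimately show ?thesis
      using distr[of i] by simp
  qed
  have indep_X: "indep_vars (\<lambda>_. borel) X {..<n}"
    unfolding X_def
    by (rule indep_vars_compose2[where Y = "\<lambda>i y. of_bool (y = x)", OF indep_vars_subset[OF indep]]) auto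
  interpret Hoeffding_ineq M "{..<n}" X "\<lambda>_. 0" "\<lambda>_. 1" "real n * P"
  proof unfold_locales
    show "AE \<omega> in M. X i \<omega> \<in> {0..1}" for i
      by (simp add: X_def)
  qed (simp_all add: indep_X expectation_X)
  have "{\<omega>\<in>space M. \<epsilon> \<le> \<bar>emp_pmf T n \<omega> x - P\<bar>} = {\<omega>\<in>space M. \<epsilon> * n \<le> \<bar>(\<Sum>i<n. X i \<omega>) - real n * P\<bar>}"
  proof -
    have "(\<Sum>i<n. X i \<omega>) = real n * emp_pmf T n \<omega> x" for \<omega>
      using \<open>n > 0\<close> by (simp add: X_def emp_pmf_eq_sum_of_bool)
    then have "\<bar>(\<Sum>i<n. X i \<omega>) - real n * P\<bar> = real n * \<bar>emp_pmf T n \<omega> x - P\<bar>" for \<omega>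
      by (simp add: abs_mult flip: right_diff_distrib)
    then show ?thesis
      using \<open>n > 0\<close> by (simp add: mult.commute)
  qed
  also have "prob \<dots> \<le> 2 * exp (- 2 * (\<epsilon> * n)\<^sup>2 / (\<Sum>i<n. (1 - 0)\<^sup>2))"
    using \<open>\<epsilon> \<ge> 0\<close> \<open>n > 0\<close> by (intro Hoeffding_ineq_abs_ge) auto
  also have "- 2 * (\<epsilon> * n)\<^sup>2 / (\<Sum>i<n. (1 - 0 :: real)\<^sup>2) = - 2 * real n * \<epsilon>\<^sup>2"
    using \<open>n > 0\<close> by (simp add: power2_eq_square)
  finally show ?thesis .
qed

lemma emp_pmf_AE_tendsto:
  fixes T :: "nat \<Rightarrow> 'a \<Rightarrow> 'b"
  assumes T_meas: "\<And>i. T i \<in> M \<rightarrow>\<^sub>M count_space UNIV"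
    and indep: "indep_vars (\<lambda>_. count_space UNIV) T UNIV"
    and distr: "\<And>i. prob {\<omega>\<in>space M. T i \<omega> = x} = P"
  shows "AE \<omega> in M. (\<lambda>n. emp_pmf T n \<omega> x) \<longlonglongrightarrow> P"
proof (rule AE_tendsto_of_summable_deviation_prob)
  show "(\<lambda>\<omega>. emp_pmf T n \<omega> x) \<in> borel_measurable M" for n
    using T_meas unfolding emp_pmf_eq_sum_of_bool by measurable
  fix \<epsilon> :: real
  assume "\<epsilon> > 0"
  have "summable (\<lambda>n. 2 * exp (- 2 * \<epsilon>\<^sup>2) ^ n)"
    using \<open>\<epsilon> > 0\<close> by (intro summable_mult summable_geometric) simp
  then show "summable (\<lambda>n. prob {\<omega>\<in>space M. \<epsilon> \<le> \<bar>emp_pmf T n \<omega> x - P\<bar>})"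
  proof (rule summable_comparison_test')
    fix n :: nat
    assume "1 \<le> n"
    then show "norm (prob {\<omega>\<in>space M. \<epsilon> \<le> \<bar>emp_pmf T n \<omega> x - P\<bar>}) \<le> 2 * exp (- 2 * \<epsilon>\<^sup>2) ^ n"
      using emp_pmf_deviation_prob_le[OF T_meas indep distr, of \<epsilon> n] \<open>\<epsilon> > 0\<close>
      by (simp add: exp_of_nat_mult[symmetric] mult_ac)
  qed
qed

end

lemma uniform_limit_sum:
  fixes f :: "'i \<Rightarrow> 'n \<Rightarrow> 'a \<Rightarrow> 'b::real_normed_vector"
  assumes "\<And>i. i \<in> I \<Longrightarrow> uniform_limit S (f i) (l i) F"
  shows "uniform_limit S (\<lambda>n x. \<Sum>i\<in>I. f i n x) (\<lambda>x. \<Sum>i\<in>I. l i x) F"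
  using assms
  by (induction I rule: infinite_finite_induct) (auto intro: uniform_limit_add uniform_limit_const)

lemma tendsto_imp_uniform_limit_const:
  "(X \<longlongrightarrow> L) F \<Longrightarrow> uniform_limit S (\<lambda>n _. X n) (\<lambda>_. L) F"
  by (auto simp: uniform_limit_iff tendsto_iff)

lemma bounded_linear_weighted_sum: "bounded_linear (\<lambda>w::real^'k::finite. \<Sum>k\<in>UNIV. w $ k * h k)"
  by (intro bounded_linear_sum bounded_linear_mult_left[THEN bounded_linear_compose] bounded_linear_vec_nth)

lemma uniform_limit_weighted_sum:
  fixes W :: "(real^'k::finite) set"
  assumes "bounded W" and "\<And>k. ((\<lambda>n. h n k) \<longlongrightarrow> h0 k) F"
  shows "uniform_limit W (\<lambda>n w. \<Sum>k\<in>UNIV. w $ k * h n k) (\<lambda>w. \<Sum>k\<in>UNIV. w $ k * h0 k) F"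
proof (intro uniform_limit_sum uniform_lim_mult)
  fix k
  show "bounded ((\<lambda>w. w $ k) ` W)"
    using assms(1) bounded_linear_vec_nth by (rule bounded_linear_image)
  show "bounded ((\<lambda>_. h0 k) ` W)"
    by (rule bounded_subset[of "{h0 k}"]) auto
qed (auto intro: uniform_limit_const tendsto_imp_uniform_limit_const assms(2))

lemma ratio_beta_uniform_limit:
  fixes t :: "'k::finite \<Rightarrow> 'a" and W :: "(real^'k) set"
  assumes "bounded W"
    and "\<And>k. ((\<lambda>n. Q n (t k)) \<longlongrightarrow> P (t k)) F"
    and "c > 0" and "\<And>w. w \<in> W \<Longrightarrow> c \<le> (\<Sum>k\<in>UNIV. w $ k * g (t k) * P (t k))"
  shows "uniform_limit W (\<lambda>n. ratio_beta t f g (Q n)) (ratio_beta t f g P) F"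
proof -
  have weighted_sum: "uniform_limit W (\<lambda>n w. \<Sum>k\<in>UNIV. w $ k * h (t k) * Q n (t k))
      (\<lambda>w. \<Sum>k\<in>UNIV. w $ k * h (t k) * P (t k)) F" for h
    using uniform_limit_weighted_sum[OF assms(1), of "\<lambda>n k. h (t k) * Q n (t k)"] assms(2)
    by (simp add: mult.assoc tendsto_mult_left)
  have "bounded ((\<lambda>w. \<Sum>k\<in>UNIV. w $ k * h (t k) * P (t k)) ` W)" for h
    using bounded_linear_image[OF assms(1) bounded_linear_weighted_sum[of "\<lambda>k. h (t k) * P (t k)"]]
    by (simp add: mult.assoc)
  moreover have "c \<le> norm (\<Sum>k\<in>UNIV. w $ k * g (t k) * P (t k))" if "w \<in> W" for w
    using assms(3) assms(4)[OF that] by (simp add: abs_if)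
  ultimately show ?thesis
    unfolding ratio_beta_def by (intro uniform_lim_divide[OF weighted_sum weighted_sum _ _ \<open>c > 0\<close>])
qed

lemma continuous_on_ratio_beta:
  assumes "\<And>w. w \<in> W \<Longrightarrow> (\<Sum>k\<in>UNIV. w $ k * g (t k) * P (t k)) \<noteq> 0"
  shows "continuous_on W (ratio_beta t f g P)"
  unfolding ratio_beta_def using assms by (intro continuous_intros) auto

lemma Wbox_eq_cbox: "(Wbox a b :: (real^'k::finite) set) = cbox (\<chi> i. 1 / b) (\<chi> i. 1 / a)"
  by (auto simp: Wbox_def mem_box_cart)

lemma compact_Wbox: "compact (Wbox a b)"
  by (simp add: Wbox_eq_cbox)

lemma is_arg_min_iff_eq_Inf:
  fixes f :: "'a \<Rightarrow> 'b::conditionally_complete_linorder"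
  assumes "bdd_below (f ` S)" and "x \<in> S"
  shows "is_arg_min f (\<lambda>y. y \<in> S) x \<longleftrightarrow> f x = Inf (f ` S)"
  using assms by (auto simp: is_arg_min_linorder intro!: antisym cInf_lower cInf_greatest)

lemma unique_arg_min_well_separated:
  fixes \<beta> :: "'a::metric_space \<Rightarrow> real"
  assumes "compact W" and "continuous_on W \<beta>"
    and arg_min: "\<And>w. is_arg_min \<beta> (\<lambda>w. w \<in> W) w \<longleftrightarrow> w = w0"
    and "\<epsilon> > 0"
  obtains \<delta> where "\<delta> > 0" and "\<And>w. w \<in> W \<Longrightarrow> \<epsilon> \<le> dist w w0 \<Longrightarrow> \<beta> w0 + \<delta> \<le> \<beta> w"
proof (cases "W - ball w0 \<epsilon> = {}")
  case True
  then show ?thesis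
    by (intro that[of 1]) (auto simp: dist_commute)
next
  case False
  have "compact (W - ball w0 \<epsilon>)"
    using assms(1) by (intro compact_diff) auto
  then obtain wk where wk: "wk \<in> W - ball w0 \<epsilon>"
    and wk_min: "\<And>w. w \<in> W - ball w0 \<epsilon> \<Longrightarrow> \<beta> wk \<le> \<beta> w"
    using continuous_attains_inf[OF _ False continuous_on_subset[OF assms(2)]] by blast
  have "\<beta> w0 < \<beta> wk"
  proof -
    have "\<not> is_arg_min \<beta> (\<lambda>w. w \<in> W) wk"
      using arg_min wk \<open>\<epsilon> > 0\<close> by auto
    then show ?thesis
      using arg_min[of w0] wk by (auto simp: is_arg_min_linorder)
  qed
  then show ?thesis
    using wk_min by (intro that[of "\<beta> wk - \<beta> w0"]) (auto simp: dist_commute)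
qed

lemma tendsto_arg_min_uniform_limit:
  fixes \<beta> :: "'a::metric_space \<Rightarrow> real"
  assumes "compact W" and "continuous_on W \<beta>"
    and arg_min: "\<And>w. is_arg_min \<beta> (\<lambda>w. w \<in> W) w \<longleftrightarrow> w = w0"
    and "uniform_limit W \<beta>n \<beta> F"
    and "eventually (\<lambda>n. is_arg_min (\<beta>n n) (\<lambda>w. w \<in> W) (wn n)) F"
  shows "(wn \<longlongrightarrow> w0) F"
proof (rule tendstoI)
  fix \<epsilon> :: real
  assume "\<epsilon> > 0"
  then obtain \<delta> where "\<delta> > 0"
    and separated: "\<And>w. w \<in> W \<Longrightarrow> \<epsilon> \<le> dist w w0 \<Longrightarrow> \<beta> w0 + \<delta> \<le> \<beta> w"
    using unique_arg_min_well_separated[OF assms(1-3)] by blast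
  have "w0 \<in> W"
    using arg_min[of w0] by (simp add: is_arg_min_def)
  have "eventually (\<lambda>n. \<forall>w\<in>W. dist (\<beta>n n w) (\<beta> w) < \<delta> / 2) F"
    using assms(4) \<open>\<delta> > 0\<close> by (intro uniform_limitD) simp_all
  with assms(5) show "eventually (\<lambda>n. dist (wn n) w0 < \<epsilon>) F"
  proof eventually_elim
    case (elim n)
    then have close: "\<And>w. w \<in> W \<Longrightarrow> \<bar>\<beta>n n w - \<beta> w\<bar> < \<delta> / 2"
      and "wn n \<in> W" and "\<beta>n n (wn n) \<le> \<beta>n n w0"
      using \<open>w0 \<in> W\<close> by (auto simp: is_arg_min_linorder dist_real_def)
    show ?case
    proof (rule ccontr)
      assume "\<not> dist (wn n) w0 < \<epsilon>"
      then have "\<beta> w0 + \<delta> \<le> \<beta> (wn n)"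
        using separated \<open>wn n \<in> W\<close> by simp
      moreover have "\<bar>\<beta>n n (wn n) - \<beta> (wn n)\<bar> < \<delta> / 2" "\<bar>\<beta>n n w0 - \<beta> w0\<bar> < \<delta> / 2"
        using close \<open>wn n \<in> W\<close> \<open>w0 \<in> W\<close> by auto
      ultimately show False
        using \<open>\<beta>n n (wn n) \<le> \<beta>n n w0\<close> by linarith
    qed
  qed
qed

lemma tendsto_uniform_limit_compose:
  fixes \<sigma> :: "'a::metric_space \<Rightarrow> 'b::real_normed_vector"
  assumes "uniform_limit W \<sigma>n \<sigma> F" and "continuous_on W \<sigma>"
    and "(wn \<longlongrightarrow> w0) F" and "w0 \<in> W" and "eventually (\<lambda>n. wn n \<in> W) F"
  shows "((\<lambda>n. \<sigma>n n (wn n)) \<longlongrightarrow> \<sigma> w0) F"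
proof -
  have "((\<lambda>n. \<sigma>n n (wn n) - \<sigma> (wn n)) \<longlongrightarrow> 0) F"
  proof (rule tendstoI)
    fix e :: real
    assume "e > 0"
    with assms(1) have "eventually (\<lambda>n. \<forall>w\<in>W. dist (\<sigma>n n w) (\<sigma> w) < e) F"
      by (simp add: uniform_limit_iff)
    with assms(5) show "eventually (\<lambda>n. dist (\<sigma>n n (wn n) - \<sigma> (wn n)) 0 < e) F"
      by eventually_elim (simp add: dist_norm)
  qed
  moreover have "((\<lambda>n. \<sigma> (wn n)) \<longlongrightarrow> \<sigma> w0) F"
    using assms(2-5) by (rule continuous_on_tendsto_compose)
  ultimately show ?thesis
    using tendsto_add by fastforce
qed

lemma eventually_bounded_uniform_limit:
  fixes l :: "'a \<Rightarrow> 'b::real_normed_vector"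
  assumes "uniform_limit S f l F" and "bounded (l ` S)"
  shows "eventually (\<lambda>n. bounded (f n ` S)) F"
proof -
  obtain B where B: "\<And>x. x \<in> S \<Longrightarrow> norm (l x) \<le> B"
    using assms(2) by (auto simp: bounded_iff)
  have "eventually (\<lambda>n. \<forall>x\<in>S. dist (f n x) (l x) < 1) F"
    using assms(1) by (simp add: uniform_limit_iff)
  then show ?thesis
  proof eventually_elim
    case (elim n)
    have "norm (f n x) \<le> B + 1" if "x \<in> S" for x
      using elim B[OF that] norm_triangle_ineq2[of "f n x" "l x"] that by (auto simp: dist_norm)
    then show ?case
      by (auto simp: bounded_iff)
  qed
qed

lemma tendsto_at_minimizers_uniform_limit:
  fixes \<beta> :: "'a::metric_space \<Rightarrow> real" and \<sigma> :: "'a \<Rightarrow> 'b::real_normed_vector"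
  assumes "compact W" and "continuous_on W \<beta>"
    and w0: "w0 \<in> W" "\<beta> w0 = Inf (\<beta> ` W)" "\<And>w. w \<in> W \<Longrightarrow> \<beta> w = Inf (\<beta> ` W) \<Longrightarrow> w = w0"
    and \<beta>n: "uniform_limit W \<beta>n \<beta> F"
    and wn: "eventually (\<lambda>n. wn n \<in> W \<and> \<beta>n n (wn n) = Inf (\<beta>n n ` W)) F"
    and "uniform_limit W \<sigma>n \<sigma> F" and "continuous_on W \<sigma>"
  shows "((\<lambda>n. \<sigma>n n (wn n)) \<longlongrightarrow> \<sigma> w0) F"
proof -
  have "bounded (\<beta> ` W)"
    using compact_continuous_image[OF assms(2,1)] by (rule compact_imp_bounded)
  then have bdd: "bdd_below (\<beta> ` W)"
    by (rule bounded_imp_bdd_below)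
  have "is_arg_min \<beta> (\<lambda>w. w \<in> W) w \<longleftrightarrow> w = w0" for w
  proof
    assume arg_min: "is_arg_min \<beta> (\<lambda>w. w \<in> W) w"
    then have "w \<in> W"
      by (simp add: is_arg_min_def)
    with arg_min show "w = w0"
      using w0(3) is_arg_min_iff_eq_Inf[OF bdd] by blast
  next
    assume "w = w0"
    then show "is_arg_min \<beta> (\<lambda>w. w \<in> W) w"
      using w0(1,2) is_arg_min_iff_eq_Inf[OF bdd] by blast
  qed
  moreover from \<beta>n \<open>bounded (\<beta> ` W)\<close> have "eventually (\<lambda>n. bounded (\<beta>n n ` W)) F"
    by (rule eventually_bounded_uniform_limit)
  with wn have "eventually (\<lambda>n. is_arg_min (\<beta>n n) (\<lambda>w. w \<in> W) (wn n)) F"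
    by eventually_elim (simp add: is_arg_min_iff_eq_Inf bounded_imp_bdd_below)
  ultimately have "(wn \<longlongrightarrow> w0) F"
    using tendsto_arg_min_uniform_limit[OF assms(1,2) _ \<beta>n] by blast
  moreover have "eventually (\<lambda>n. wn n \<in> W) F"
    using wn by (rule eventually_mono) simp
  ultimately show ?thesis
    by (rule tendsto_uniform_limit_compose[OF assms(8,9) _ w0(1)])
qed

lemma tendsto_at_maximizers_uniform_limit:
  fixes \<beta> :: "'a::metric_space \<Rightarrow> real" and \<sigma> :: "'a \<Rightarrow> 'b::real_normed_vector"
  assumes "compact W" and "continuous_on W \<beta>"
    and w0: "w0 \<in> W" "\<beta> w0 = Sup (\<beta> ` W)" "\<And>w. w \<in> W \<Longrightarrow> \<beta> w = Sup (\<beta> ` W) \<Longrightarrow> w = w0"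
    and \<beta>n: "uniform_limit W \<beta>n \<beta> F"
    and wn: "eventually (\<lambda>n. wn n \<in> W \<and> \<beta>n n (wn n) = Sup (\<beta>n n ` W)) F"
    and "uniform_limit W \<sigma>n \<sigma> F" and "continuous_on W \<sigma>"
  shows "((\<lambda>n. \<sigma>n n (wn n)) \<longlongrightarrow> \<sigma> w0) F"
proof -
  have Inf_uminus: "Inf ((\<lambda>w. - h w) ` W) = - Sup (h ` W)" for h :: "'a \<Rightarrow> real"
    by (simp add: Inf_real_def image_image)
  have "continuous_on W (\<lambda>w. - \<beta> w)"
    using assms(2) by (rule continuous_on_minus)
  moreover have "- \<beta> w0 = Inf ((\<lambda>w. - \<beta> w) ` W)"
    using w0(2) by (simp add: Inf_uminus)
  moreover have "w = w0" if "w \<in> W" and "- \<beta> w = Inf ((\<lambda>w. - \<beta> w) ` W)" for w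
    using w0(3) that by (simp add: Inf_uminus)
  moreover have "uniform_limit W (\<lambda>n w. - \<beta>n n w) (\<lambda>w. - \<beta> w) F"
    using \<beta>n by (rule uniform_limit_uminus)
  moreover have "eventually (\<lambda>n. wn n \<in> W \<and> - \<beta>n n (wn n) = Inf ((\<lambda>w. - \<beta>n n w) ` W)) F"
    using wn by eventually_elim (simp add: Inf_uminus)
  ultimately show ?thesis
    using tendsto_at_minimizers_uniform_limit[OF assms(1) _ w0(1) _ _ _ _ assms(8,9)] by blast
qed

theorem proposition1:
  fixes M :: "'o measure"
    and a b :: real
    and t :: "'k::finite \<Rightarrow> real^'d::finite"
    and f g p :: "real^'d \<Rightarrow> real"
    and T :: "nat \<Rightarrow> 'o \<Rightarrow> real^'d"
    and wL wH :: "real^'k"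
    and whL whH :: "nat \<Rightarrow> 'o \<Rightarrow> real^'k"
    and \<sigma>2 :: "real^'k \<Rightarrow> real"
    and \<sigma>2hat :: "nat \<Rightarrow> 'o \<Rightarrow> real^'k \<Rightarrow> real"
  defines "W \<equiv> (Wbox a b :: (real^'k) set)"
    and "\<beta> \<equiv> ratio_beta t f g p"
    and "\<beta>hat \<equiv> (\<lambda>n \<omega>. ratio_beta t f g (emp_pmf T n \<omega>))"
    and "\<beta>H \<equiv> Sup (ratio_beta t f g p ` Wbox a b)"
    and "\<beta>L \<equiv> Inf (ratio_beta t f g p ` Wbox a b)"
    and "\<beta>hatH \<equiv> (\<lambda>n \<omega>. Sup (ratio_beta t f g (emp_pmf T n \<omega>) ` Wbox a b))"
    and "\<beta>hatL \<equiv> (\<lambda>n \<omega>. Inf (ratio_beta t f g (emp_pmf T n \<omega>) ` Wbox a b))"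
  assumes M: "prob_space M"
    and ab: "0 < a" "a \<le> b" "b \<le> 1"
    and t_inj: "inj t"
    and p_nonneg: "\<And>x. p x \<ge> 0"
    and p_sum: "(\<Sum>k\<in>UNIV. p (t k)) = 1"
    and T_meas: "\<And>i. T i \<in> M \<rightarrow>\<^sub>M count_space UNIV"
    and T_indep: "prob_space.indep_vars M (\<lambda>_. count_space UNIV) T UNIV"
    and T_distr: "\<And>i k. measure M {\<omega> \<in> space M. T i \<omega> = t k} = p (t k)"
    and R1_pop: "\<And>k. f (t k) / g (t k) \<noteq> \<beta>L \<and> f (t k) / g (t k) \<noteq> \<beta>H"
    and R1_samp: "\<exists>N. \<forall>n\<ge>N. AE \<omega> in M. \<forall>k.
                    f (t k) / g (t k) \<noteq> \<beta>hatL n \<omega> \<and> f (t k) / g (t k) \<noteq> \<beta>hatH n \<omega>"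
    and R2: "\<exists>c>0. (\<forall>w\<in>W. (\<Sum>k\<in>UNIV. w $ k * g (t k) * p (t k)) \<ge> c) \<and>
               (\<exists>N. \<forall>n\<ge>N. AE \<omega> in M. \<forall>w\<in>W.
                  (\<Sum>k\<in>UNIV. w $ k * g (t k) * emp_pmf T n \<omega> (t k)) \<ge> c)"
    and wL: "wL \<in> W" "\<beta> wL = \<beta>L" "\<And>w. w \<in> W \<Longrightarrow> \<beta> w = \<beta>L \<Longrightarrow> w = wL"
    and wH: "wH \<in> W" "\<beta> wH = \<beta>H" "\<And>w. w \<in> W \<Longrightarrow> \<beta> w = \<beta>H \<Longrightarrow> w = wH"
    and whL: "\<exists>N. \<forall>n\<ge>N. AE \<omega> in M. whL n \<omega> \<in> W \<and> \<beta>hat n \<omega> (whL n \<omega>) = \<beta>hatL n \<omega> \<and>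
                 (\<forall>w\<in>W. \<beta>hat n \<omega> w = \<beta>hatL n \<omega> \<longrightarrow> w = whL n \<omega>)"
    and whH: "\<exists>N. \<forall>n\<ge>N. AE \<omega> in M. whH n \<omega> \<in> W \<and> \<beta>hat n \<omega> (whH n \<omega>) = \<beta>hatH n \<omega> \<and>
                 (\<forall>w\<in>W. \<beta>hat n \<omega> w = \<beta>hatH n \<omega> \<longrightarrow> w = whH n \<omega>)"
    and \<sigma>_cont: "continuous_on W \<sigma>2"
    and \<sigma>hat_unif: "AE \<omega> in M. uniform_limit W (\<lambda>n. \<sigma>2hat n \<omega>) \<sigma>2 sequentially"
  shows "(AE \<omega> in M. (\<lambda>n. \<sigma>2hat n \<omega> (whL n \<omega>)) \<longlonglongrightarrow> \<sigma>2 wL) \<and>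
         (AE \<omega> in M. (\<lambda>n. \<sigma>2hat n \<omega> (whH n \<omega>)) \<longlonglongrightarrow> \<sigma>2 wH)"
proof -
  interpret prob_space M
    by (rule M)
  have W_compact: "compact W"
    unfolding W_def by (rule compact_Wbox)
  obtain c where "c > 0" and denom: "\<And>w. w \<in> W \<Longrightarrow> c \<le> (\<Sum>k\<in>UNIV. w $ k * g (t k) * p (t k))"
    using R2 by blast
  have \<beta>_cont: "continuous_on W \<beta>"
    unfolding \<beta>_def using \<open>c > 0\<close> denom by (intro continuous_on_ratio_beta) force
  have "AE \<omega> in M. \<forall>k\<in>UNIV. (\<lambda>n. emp_pmf T n \<omega> (t k)) \<longlonglongrightarrow> p (t k)"
    by (intro AE_finite_allI emp_pmf_AE_tendsto[OF T_meas T_indep T_distr]) simp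
  then have \<beta>hat_unif: "AE \<omega> in M. uniform_limit W (\<lambda>n. \<beta>hat n \<omega>) \<beta> sequentially"
    unfolding \<beta>hat_def \<beta>_def
    by eventually_elim (auto intro!: ratio_beta_uniform_limit compact_imp_bounded W_compact \<open>c > 0\<close> denom)
  have optima: "\<beta>L = Inf (\<beta> ` W)" "\<beta>H = Sup (\<beta> ` W)"
    "\<beta>hatL n \<omega> = Inf (\<beta>hat n \<omega> ` W)" "\<beta>hatH n \<omega> = Sup (\<beta>hat n \<omega> ` W)" for n \<omega>
    by (simp_all add: W_def \<beta>_def \<beta>hat_def \<beta>L_def \<beta>H_def \<beta>hatL_def \<beta>hatH_def)
  show ?thesis
  proof
    show "AE \<omega> in M. (\<lambda>n. \<sigma>2hat n \<omega> (whL n \<omega>)) \<longlonglongrightarrow> \<sigma>2 wL"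
      using \<beta>hat_unif \<sigma>hat_unif AE_eventually_sequentiallyI[OF whL[unfolded optima]]
      by eventually_elim (rule tendsto_at_minimizers_uniform_limit[OF W_compact \<beta>_cont wL[unfolded optima]],
          auto intro: \<sigma>_cont elim: eventually_mono)
    show "AE \<omega> in M. (\<lambda>n. \<sigma>2hat n \<omega> (whH n \<omega>)) \<longlonglongrightarrow> \<sigma>2 wH"
      using \<beta>hat_unif \<sigma>hat_unif AE_eventually_sequentiallyI[OF whH[unfolded optima]]
      by eventually_elim (rule tendsto_at_maximizers_uniform_limit[OF W_compact \<beta>_cont wH[unfolded optima]],
          auto intro: \<sigma>_cont elim: eventually_mono)
  qed
qed

end
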